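(* Let $n\ge2$, $l\in\{1,\dots,n-1\}$, $p$ a strictly positive distribution on $\{0,1\}^n$, and let the Fisher information matrix of the $l$-mixed coordinates at $p$ be $G_\zeta=\begin{pmatrix}A&0\\0&B\end{pmatrix}$ with $A=((G_\eta^{-1})_{I_\eta})^{-1}$ and $B=((G_\theta^{-1})_{J_\theta})^{-1}$. Then the diagonal elements of $A$ are lower bounded by one, and the diagonal elements of $B$ are upper bounded by one.
   Context: $X_I(x)=\prod_{i\in I}x_i$; $\eta_I=E_p[X_I]$; $\theta^I$ defined by $\log p(x)=\sum_{I\ne\emptyset}\theta^IX_I(x)-\psi(\theta)$. $I_\eta=\{I:1\le|I|\le l\}$, $J_\theta=\{I:|I|>l\}$; the $l$-mixed coordinates are $((\eta_I)_{I\in I_\eta},(\theta^I)_{I\in J_\theta})$. $G_\eta,G_\theta$ are the Fisher information matrices of the $\eta$- and $\theta$-coordinates at $p$ (so $G_\theta$ has entries $\eta_{I\cup J}-\eta_I\eta_J$), and $M_{\mathcal I}$ denotes the principal submatrix of $M$ indexed by $\mathcal I$. *)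

theory Defs
  imports Complex_Main "HOL-Library.FuncSet"
begin

definition cube :: "nat \<Rightarrow> (nat \<Rightarrow> real) set" where
  "cube n = PiE {1..n} (\<lambda>_. {0, 1})"

definition XI :: "nat set \<Rightarrow> (nat \<Rightarrow> real) \<Rightarrow> real" where
  "XI I x = (\<Prod>i\<in>I. x i)"

definition eta :: "nat \<Rightarrow> ((nat \<Rightarrow> real) \<Rightarrow> real) \<Rightarrow> nat set \<Rightarrow> real" where
  "eta n p I = (\<Sum>x\<in>cube n. p x * XI I x)"

definition idx :: "nat \<Rightarrow> nat set set" where
  "idx n = {I. I \<subseteq> {1..n} \<and> I \<noteq> {}}"

definition I_eta :: "nat \<Rightarrow> nat \<Rightarrow> nat set set" where
  "I_eta n l = {I \<in> idx n. 1 \<le> card I \<and> card I \<le> l}"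

definition J_theta :: "nat \<Rightarrow> nat \<Rightarrow> nat set set" where
  "J_theta n l = {I \<in> idx n. card I > l}"

definition mat_inv_on :: "'i set \<Rightarrow> ('i \<Rightarrow> 'i \<Rightarrow> real) \<Rightarrow> ('i \<Rightarrow> 'i \<Rightarrow> real)" where
  "mat_inv_on S M = (SOME N.
      (\<forall>i\<in>S. \<forall>j\<in>S. (\<Sum>k\<in>S. M i k * N k j) = (if i = j then 1 else 0)) \<and>
      (\<forall>i\<in>S. \<forall>j\<in>S. (\<Sum>k\<in>S. N i k * M k j) = (if i = j then 1 else 0)))"

text \<open>Fisher information matrix in theta-coordinates: eta_{I u J} - eta_I eta_J.\<close>
definition G_theta :: "nat \<Rightarrow> ((nat \<Rightarrow> real) \<Rightarrow> real) \<Rightarrow> nat set \<Rightarrow> nat set \<Rightarrow> real" where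
  "G_theta n p I J = eta n p (I \<union> J) - eta n p I * eta n p J"

definition G_eta :: "nat \<Rightarrow> ((nat \<Rightarrow> real) \<Rightarrow> real) \<Rightarrow> nat set \<Rightarrow> nat set \<Rightarrow> real" where
  "G_eta n p = mat_inv_on (idx n) (G_theta n p)"

definition blockA :: "nat \<Rightarrow> nat \<Rightarrow> ((nat \<Rightarrow> real) \<Rightarrow> real) \<Rightarrow> nat set \<Rightarrow> nat set \<Rightarrow> real" where
  "blockA n l p = mat_inv_on (I_eta n l) (mat_inv_on (idx n) (G_eta n p))"

definition blockB :: "nat \<Rightarrow> nat \<Rightarrow> ((nat \<Rightarrow> real) \<Rightarrow> real) \<Rightarrow> nat set \<Rightarrow> nat set \<Rightarrow> real" where
  "blockB n l p = mat_inv_on (J_theta n l) (mat_inv_on (idx n) (G_theta n p))"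

end

theory Submission
  imports Defs "Jordan_Normal_Form.Determinant"
begin

text \<open>G_theta is the covariance matrix of the statistics X_I under p. It is positive definite,
because p > 0 and the functions X_I together with the constant function are linearly independent
on the cube, and its diagonal entries are the variances eta_I (1 - eta_I) \<le> 1/4 of 0/1-valued
variables. Since G_eta is the inverse of M = G_theta, A is the inverse of a principal submatrix of
M and B that of a principal submatrix of M^-1. The quadratic form of M at e_i - A e_i gives
A_ii \<ge> 2 - M_ii, and the quadratic form of M^-1 at M e_j - B e_j gives B_jj \<le> M_jj.\<close>

definition matrix_inverse_on :: "'i set \<Rightarrow> ('i \<Rightarrow> 'i \<Rightarrow> real) \<Rightarrow> ('i \<Rightarrow> 'i \<Rightarrow> real) \<Rightarrow> bool" where
  "matrix_inverse_on S M N \<longleftrightarrow>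
      (\<forall>i\<in>S. \<forall>j\<in>S. (\<Sum>k\<in>S. M i k * N k j) = (if i = j then 1 else 0)) \<and>
      (\<forall>i\<in>S. \<forall>j\<in>S. (\<Sum>k\<in>S. N i k * M k j) = (if i = j then 1 else 0))"

definition mult_vec_on :: "'i set \<Rightarrow> ('i \<Rightarrow> 'i \<Rightarrow> real) \<Rightarrow> ('i \<Rightarrow> real) \<Rightarrow> 'i \<Rightarrow> real" where
  "mult_vec_on S M x k = (\<Sum>l\<in>S. M k l * x l)"

definition bform :: "'i set \<Rightarrow> ('i \<Rightarrow> 'i \<Rightarrow> real) \<Rightarrow> ('i \<Rightarrow> real) \<Rightarrow> ('i \<Rightarrow> real) \<Rightarrow> real" where
  "bform S M x y = (\<Sum>k\<in>S. \<Sum>l\<in>S. x k * M k l * y l)"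

definition pos_def_on :: "'i set \<Rightarrow> ('i \<Rightarrow> 'i \<Rightarrow> real) \<Rightarrow> bool" where
  "pos_def_on S M \<longleftrightarrow> (\<forall>x. (\<exists>i\<in>S. x i \<noteq> 0) \<longrightarrow> bform S M x x > 0)"

definition symmetric_on :: "'i set \<Rightarrow> ('i \<Rightarrow> 'i \<Rightarrow> real) \<Rightarrow> bool" where
  "symmetric_on S M \<longleftrightarrow> (\<forall>i\<in>S. \<forall>j\<in>S. M i j = M j i)"

lemmas if_mult_distrib = if_distrib[where f = "\<lambda>c. c * _"]

lemma sum_extend_by_zero_right:
  fixes f g :: "_ \<Rightarrow> real"
  assumes "finite S" "T \<subseteq> S"
  shows "(\<Sum>k\<in>S. f k * (if k \<in> T then g k else 0)) = (\<Sum>k\<in>T. f k * g k)"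
proof -
  have "(\<Sum>k\<in>S. f k * (if k \<in> T then g k else 0)) = (\<Sum>k\<in>S. if k \<in> T then f k * g k else 0)"
    by (intro sum.cong) auto
  also have "\<dots> = (\<Sum>k\<in>T. f k * g k)"
    using assms by (simp add: sum.inter_restrict[symmetric] Int_absorb1)
  finally show ?thesis .
qed

lemma sum_extend_by_zero_left:
  fixes f g :: "_ \<Rightarrow> real"
  assumes "finite S" "T \<subseteq> S"
  shows "(\<Sum>k\<in>S. (if k \<in> T then g k else 0) * f k) = (\<Sum>k\<in>T. g k * f k)"
  using sum_extend_by_zero_right[OF assms, of f g] by (simp add: mult.commute)

subsection \<open>Inverses of matrices indexed by a finite set\<close>

lemma mat_inv_on_eq_Eps: "mat_inv_on S M = (SOME N. matrix_inverse_on S M N)"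
  unfolding mat_inv_on_def matrix_inverse_on_def ..

lemma mat_inv_on_inverse:
  "\<exists>N. matrix_inverse_on S M N \<Longrightarrow> matrix_inverse_on S M (mat_inv_on S M)"
  unfolding mat_inv_on_eq_Eps by (rule someI_ex[where P = "matrix_inverse_on S M"])

lemma matrix_inverse_on_commute: "matrix_inverse_on S M N \<Longrightarrow> matrix_inverse_on S N M"
  unfolding matrix_inverse_on_def by blast

lemma matrix_inverse_on_unique:
  assumes "finite S" "matrix_inverse_on S M N1" "matrix_inverse_on S M N2" "i \<in> S" "j \<in> S"
  shows "N1 i j = N2 i j"
proof -
  have "N1 i j = (\<Sum>k\<in>S. N1 i k * (if k = j then 1 else 0))"
    using assms(1,5) by (simp add: if_distrib cong: if_cong)
  also have "\<dots> = (\<Sum>k\<in>S. N1 i k * (\<Sum>l\<in>S. M k l * N2 l j))"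
    using assms(3,5) unfolding matrix_inverse_on_def by simp
  also have "\<dots> = (\<Sum>l\<in>S. (\<Sum>k\<in>S. N1 i k * M k l) * N2 l j)"
    by (simp add: sum_distrib_left sum_distrib_right mult.assoc) (rule sum.swap)
  also have "\<dots> = N2 i j"
    using assms unfolding matrix_inverse_on_def by (simp add: if_mult_distrib cong: if_cong)
  finally show ?thesis .
qed

lemma mat_inv_on_cong:
  assumes "\<And>i j. i \<in> S \<Longrightarrow> j \<in> S \<Longrightarrow> M i j = M' i j"
  shows "mat_inv_on S M = mat_inv_on S M'"
proof -
  have "matrix_inverse_on S M = matrix_inverse_on S M'"
    using assms unfolding matrix_inverse_on_def by (intro ext) (simp cong: sum.cong)
  then show ?thesis unfolding mat_inv_on_eq_Eps by simp
qed

lemma mat_inv_on_mat_inv_on: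
  assumes "finite S" "\<exists>N. matrix_inverse_on S M N" "i \<in> S" "j \<in> S"
  shows "mat_inv_on S (mat_inv_on S M) i j = M i j"
proof -
  have inv: "matrix_inverse_on S (mat_inv_on S M) M"
    using matrix_inverse_on_commute mat_inv_on_inverse assms(2) by blast
  then have "matrix_inverse_on S (mat_inv_on S M) (mat_inv_on S (mat_inv_on S M))"
    by (intro mat_inv_on_inverse exI)
  then show ?thesis using matrix_inverse_on_unique[OF assms(1) _ inv assms(3,4)] by blast
qed

lemma mat_invertible_if_kernel_trivial:
  fixes A :: "real mat"
  assumes A: "A \<in> carrier_mat m m"
    and ker: "\<And>v. v \<in> carrier_vec m \<Longrightarrow> A *\<^sub>v v = 0\<^sub>v m \<Longrightarrow> v = 0\<^sub>v m"
  obtains B where "B \<in> carrier_mat m m" "B * A = 1\<^sub>m m" "A * B = 1\<^sub>m m"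
proof -
  have "det A \<noteq> 0" using det_0_iff_vec_prod_zero[OF A] ker by blast
  from det_non_zero_imp_unit[OF A this, unfolded Units_def, of "()"] that show ?thesis
    by (auto simp: ring_mat_def)
qed

text \<open>Enumerating S turns M into a square JNF matrix, which is invertible since its kernel is
trivial; the inverse is transported back along the enumeration.\<close>
lemma matrix_inverse_on_exists:
  assumes fin: "finite S"
    and ker: "\<And>x. \<forall>i\<in>S. mult_vec_on S M x i = 0 \<Longrightarrow> \<forall>i\<in>S. x i = 0"
  shows "\<exists>N. matrix_inverse_on S M N"
proof -
  define m where "m = card S"
  obtain g where g: "bij_betw g {0..<m} S" using ex_bij_betw_nat_finite[OF fin] m_def by blast
  define h where "h = the_inv_into {0..<m} g"
  have hg: "\<And>a. a < m \<Longrightarrow> h (g a) = a" and gh: "\<And>i. i \<in> S \<Longrightarrow> g (h i) = i"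
    and hS: "\<And>i. i \<in> S \<Longrightarrow> h i < m" and gS: "\<And>a. a < m \<Longrightarrow> g a \<in> S"
    using g unfolding h_def bij_betw_def
    by (auto simp: the_inv_into_f_f f_the_inv_into_f
        intro!: the_inv_into_into[THEN atLeastLessThan_iff[THEN iffD1, THEN conjunct2]])
  have reindex: "\<And>f. (\<Sum>j\<in>S. f j) = (\<Sum>b\<in>{0..<m}. f (g b))"
    using g by (simp add: sum.reindex_bij_betw)
  define A where "A = mat m m (\<lambda>(a, b). M (g a) (g b))"
  have A: "A \<in> carrier_mat m m" unfolding A_def by simp
  obtain B where B: "B \<in> carrier_mat m m" and BA: "B * A = 1\<^sub>m m" and AB: "A * B = 1\<^sub>m m"
  proof (rule mat_invertible_if_kernel_trivial[OF A])
    fix v :: "real vec" assume v: "v \<in> carrier_vec m" "A *\<^sub>v v = 0\<^sub>v m"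
    have "mult_vec_on S M (\<lambda>i. v $ h i) i = (A *\<^sub>v v) $ h i" if i: "i \<in> S" for i
    proof -
      have "mult_vec_on S M (\<lambda>i. v $ h i) i = (\<Sum>b\<in>{0..<m}. M i (g b) * v $ b)"
        unfolding mult_vec_on_def by (simp add: reindex hg)
      also have "\<dots> = (A *\<^sub>v v) $ h i"
        using v(1) hS[OF i] gh[OF i] by (simp add: A_def scalar_prod_def)
      finally show ?thesis .
    qed
    then have "\<forall>i\<in>S. mult_vec_on S M (\<lambda>i. v $ h i) i = 0" using v(2) hS by simp
    then have "\<forall>i\<in>S. v $ h i = 0" by (rule ker)
    then have "v $ a = 0" if "a < m" for a using that gS hg by metis
    then show "v = 0\<^sub>v m" using v(1) by (intro eq_vecI) auto
  qed
  have "matrix_inverse_on S M (\<lambda>i j. B $$ (h i, h j))"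
    unfolding matrix_inverse_on_def
  proof (intro conjI ballI)
    fix i j assume i: "i \<in> S" and j: "j \<in> S"
    have hij: "h i = h j \<longleftrightarrow> i = j" using gh i j by metis
    show "(\<Sum>k\<in>S. M i k * B $$ (h k, h j)) = (if i = j then 1 else 0)"
      using arg_cong[OF AB, of "\<lambda>C. C $$ (h i, h j)"] B hS[OF i] hS[OF j] gh[OF i] hij
      by (simp add: reindex hg A_def scalar_prod_def)
    show "(\<Sum>k\<in>S. B $$ (h i, h k) * M k j) = (if i = j then 1 else 0)"
      using arg_cong[OF BA, of "\<lambda>C. C $$ (h i, h j)"] B hS[OF i] hS[OF j] gh[OF j] hij
      by (simp add: reindex hg A_def scalar_prod_def)
  qed
  then show ?thesis by blast
qed

subsection \<open>Positive definite matrices\<close>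

lemma bform_eq_sum_mult_vec: "bform S M x y = (\<Sum>k\<in>S. x k * mult_vec_on S M y k)"
  unfolding bform_def mult_vec_on_def by (simp add: sum_distrib_left mult.assoc)

lemma bform_commute: "symmetric_on S M \<Longrightarrow> bform S M x y = bform S M y x"
  unfolding bform_def symmetric_on_def
  by (subst sum.swap) (intro sum.cong refl, simp add: mult_ac)

lemma bform_diff_diff:
  "bform S M (\<lambda>k. x k - y k) (\<lambda>k. x k - y k) =
     bform S M x x - bform S M x y - bform S M y x + bform S M y y"
  unfolding bform_def by (simp add: algebra_simps sum_subtractf sum.distrib)

lemma bform_nonneg: "pos_def_on S M \<Longrightarrow> bform S M x x \<ge> 0"
  unfolding pos_def_on_def bform_def by (cases "\<exists>i\<in>S. x i \<noteq> 0") force+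

lemma pos_def_on_kernel_trivial:
  assumes "pos_def_on S M" "\<forall>i\<in>S. mult_vec_on S M x i = 0"
  shows "\<forall>i\<in>S. x i = 0"
  using assms bform_eq_sum_mult_vec[of S M x x] unfolding pos_def_on_def by force

lemma pos_def_on_mat_inv_on:
  assumes "finite S" "pos_def_on S M"
  shows "matrix_inverse_on S M (mat_inv_on S M)"
proof -
  have "\<exists>N. matrix_inverse_on S M N"
    using assms(1) by (rule matrix_inverse_on_exists) (rule pos_def_on_kernel_trivial[OF assms(2)])
  then show ?thesis by (rule mat_inv_on_inverse)
qed

lemma pos_def_on_subset:
  assumes "finite S" "pos_def_on S M" "T \<subseteq> S"
  shows "pos_def_on T M"
  unfolding pos_def_on_def
proof (intro allI impI)
  fix x :: "_ \<Rightarrow> real" assume x: "\<exists>i\<in>T. x i \<noteq> 0"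
  define x' where "x' = (\<lambda>i. if i \<in> T then x i else 0)"
  have "bform S M x' x' = bform T M x x"
    using assms(1,3) unfolding bform_eq_sum_mult_vec mult_vec_on_def x'_def
    by (simp add: sum_extend_by_zero_left sum_extend_by_zero_right)
  moreover have "\<exists>i\<in>S. x' i \<noteq> 0" using x assms(3) unfolding x'_def by auto
  ultimately show "bform T M x x > 0" using assms(2) unfolding pos_def_on_def by metis
qed

lemma symmetric_on_matrix_inverse:
  assumes "finite S" "symmetric_on S M" "matrix_inverse_on S M N"
  shows "symmetric_on S N"
proof -
  have "matrix_inverse_on S M (\<lambda>i j. N j i)"
    using assms(2,3) unfolding matrix_inverse_on_def symmetric_on_def
    by (simp add: mult.commute cong: sum.cong)
  then show ?thesis
    using matrix_inverse_on_unique[OF assms(1) assms(3)] unfolding symmetric_on_def by metis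
qed

lemma pos_def_on_matrix_inverse:
  assumes fin: "finite S" and pd: "pos_def_on S M" and inv: "matrix_inverse_on S M N"
  shows "pos_def_on S N"
  unfolding pos_def_on_def
proof (intro allI impI)
  fix x :: "_ \<Rightarrow> real" assume x: "\<exists>i\<in>S. x i \<noteq> 0"
  define y where "y = mult_vec_on S N x"
  have My: "mult_vec_on S M y k = x k" if "k \<in> S" for k
  proof -
    have "mult_vec_on S M y k = (\<Sum>i\<in>S. (\<Sum>l\<in>S. M k l * N l i) * x i)"
      unfolding y_def mult_vec_on_def
      by (simp add: sum_distrib_left sum_distrib_right mult.assoc) (rule sum.swap)
    then show ?thesis
      using inv that fin unfolding matrix_inverse_on_def by (simp add: if_mult_distrib cong: if_cong)
  qed
  have "\<exists>i\<in>S. y i \<noteq> 0"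
  proof (rule ccontr)
    assume "\<not> (\<exists>i\<in>S. y i \<noteq> 0)"
    then have "mult_vec_on S M y k = 0" for k by (simp add: mult_vec_on_def)
    then show False using x My by simp
  qed
  then have "bform S M y y > 0" using pd unfolding pos_def_on_def by blast
  moreover have "bform S M y y = bform S N x x"
  proof -
    have "bform S M y y = (\<Sum>k\<in>S. y k * x k)"
      unfolding bform_eq_sum_mult_vec using My by (intro sum.cong) auto
    also have "\<dots> = bform S N x x"
      unfolding bform_eq_sum_mult_vec y_def by (simp add: mult.commute)
    finally show ?thesis .
  qed
  ultimately show "bform S N x x > 0" by simp
qed

lemma bform_sub_inverse_column:
  assumes fin: "finite S" and sym: "symmetric_on S M" and TS: "T \<subseteq> S"
    and inv: "matrix_inverse_on T M A" and i: "i \<in> T"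
  defines "u \<equiv> \<lambda>k. if k \<in> T then A k i else 0"
  shows "bform S M (\<lambda>k. w k - u k) (\<lambda>k. w k - u k) =
    bform S M w w - 2 * (\<Sum>k\<in>T. A k i * mult_vec_on S M w k) + A i i"
proof -
  have finT: "finite T" using fin TS finite_subset by blast
  have uw: "bform S M u w = (\<Sum>k\<in>T. A k i * mult_vec_on S M w k)"
    unfolding bform_eq_sum_mult_vec u_def by (rule sum_extend_by_zero_left[OF fin TS])
  have Mu: "mult_vec_on S M u k = (\<Sum>l\<in>T. M k l * A l i)" for k
    unfolding mult_vec_on_def u_def by (rule sum_extend_by_zero_right[OF fin TS])
  have "bform S M u u = (\<Sum>k\<in>T. A k i * (if k = i then 1 else 0))"
    unfolding bform_eq_sum_mult_vec Mu unfolding u_def sum_extend_by_zero_left[OF fin TS]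
    using inv i unfolding matrix_inverse_on_def by (intro sum.cong) auto
  also have "\<dots> = A i i" using finT i by (simp add: if_distrib cong: if_cong)
  finally have uu: "bform S M u u = A i i" .
  show ?thesis
    unfolding bform_diff_diff uu bform_commute[OF sym, of w u] uw by simp
qed

lemma diag_inverse_principal_submatrix_ge:
  assumes fin: "finite S" and pd: "pos_def_on S M" and sym: "symmetric_on S M"
    and TS: "T \<subseteq> S" and i: "i \<in> T"
  shows "mat_inv_on T M i i \<ge> 2 - M i i"
proof -
  let ?A = "mat_inv_on T M" and ?e = "\<lambda>k. if k = i then 1 else 0"
  have iS: "i \<in> S" using i TS by blast
  have inv: "matrix_inverse_on T M ?A"
    using pos_def_on_subset[OF fin pd TS] fin TS
    by (intro pos_def_on_mat_inv_on) (auto intro: finite_subset)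
  have Me: "mult_vec_on S M ?e k = M k i" for k
    unfolding mult_vec_on_def using fin iS by (simp add: if_distrib cong: if_cong)
  have "(\<Sum>k\<in>T. ?A k i * M k i) = (\<Sum>k\<in>T. M i k * ?A k i)"
    using sym TS i unfolding symmetric_on_def by (intro sum.cong) (auto simp: mult.commute)
  also have "\<dots> = 1" using inv i unfolding matrix_inverse_on_def by simp
  finally have cross: "(\<Sum>k\<in>T. ?A k i * M k i) = 1" .
  have ee: "bform S M ?e ?e = M i i"
    unfolding bform_eq_sum_mult_vec Me using fin iS by (simp add: if_mult_distrib cong: if_cong)
  have "0 \<le> bform S M (\<lambda>k. ?e k - (if k \<in> T then ?A k i else 0))
                      (\<lambda>k. ?e k - (if k \<in> T then ?A k i else 0))"
    by (rule bform_nonneg[OF pd])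
  also have "\<dots> = M i i - 2 + ?A i i"
    unfolding bform_sub_inverse_column[OF fin sym TS inv i] ee Me cross by simp
  finally show ?thesis by simp
qed

lemma diag_inverse_principal_submatrix_of_inverse_le:
  assumes fin: "finite S" and pd: "pos_def_on S M" and sym: "symmetric_on S M"
    and TS: "T \<subseteq> S" and j: "j \<in> T"
  shows "mat_inv_on T (mat_inv_on S M) j j \<le> M j j"
proof -
  let ?N = "mat_inv_on S M" and ?c = "\<lambda>k. M k j"
  let ?B = "mat_inv_on T ?N"
  have jS: "j \<in> S" using j TS by blast
  have invN: "matrix_inverse_on S M ?N" using fin pd by (rule pos_def_on_mat_inv_on)
  have pdN: "pos_def_on S ?N" using fin pd invN by (rule pos_def_on_matrix_inverse)
  have symN: "symmetric_on S ?N" using fin sym invN by (rule symmetric_on_matrix_inverse)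
  have invB: "matrix_inverse_on T ?N ?B"
    using pos_def_on_subset[OF fin pdN TS] fin TS
    by (intro pos_def_on_mat_inv_on) (auto intro: finite_subset)
  have Nc: "mult_vec_on S ?N ?c k = (if k = j then 1 else 0)" if "k \<in> S" for k
    using invN that jS unfolding matrix_inverse_on_def mult_vec_on_def by simp
  have "bform S ?N ?c ?c = (\<Sum>k\<in>S. M k j * (if k = j then 1 else 0))"
    unfolding bform_eq_sum_mult_vec using Nc by (intro sum.cong) auto
  also have "\<dots> = M j j" using fin jS by (simp add: if_distrib cong: if_cong)
  finally have cc: "bform S ?N ?c ?c = M j j" .
  have "(\<Sum>k\<in>T. ?B k j * mult_vec_on S ?N ?c k) = (\<Sum>k\<in>T. ?B k j * (if k = j then 1 else 0))"
    using Nc TS by (intro sum.cong) auto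
  also have "\<dots> = ?B j j" using finite_subset[OF TS fin] j by (simp add: if_distrib cong: if_cong)
  finally have cross: "(\<Sum>k\<in>T. ?B k j * mult_vec_on S ?N ?c k) = ?B j j" .
  have "0 \<le> bform S ?N (\<lambda>k. ?c k - (if k \<in> T then ?B k j else 0))
                       (\<lambda>k. ?c k - (if k \<in> T then ?B k j else 0))"
    by (rule bform_nonneg[OF pdN])
  also have "\<dots> = M j j - 2 * ?B j j + ?B j j"
    unfolding bform_sub_inverse_column[OF fin symN TS invB j] cc cross ..
  finally show ?thesis by simp
qed

subsection \<open>The Fisher information in theta-coordinates\<close>

lemma weighted_covariance_eq:
  fixes p a b :: "'x \<Rightarrow> real"
  assumes "(\<Sum>x\<in>C. p x) = 1"
  defines "ma \<equiv> \<Sum>y\<in>C. p y * a y" and "mb \<equiv> \<Sum>y\<in>C. p y * b y"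
  shows "(\<Sum>x\<in>C. p x * (a x * b x)) - ma * mb = (\<Sum>x\<in>C. p x * (a x - ma) * (b x - mb))"
proof -
  have "(\<Sum>x\<in>C. p x * (a x - ma) * (b x - mb)) =
      (\<Sum>x\<in>C. p x * (a x * b x)) - (\<Sum>x\<in>C. p x * a x) * mb - ma * (\<Sum>x\<in>C. p x * b x)
        + ma * mb * (\<Sum>x\<in>C. p x)"
    by (simp add: algebra_simps sum_subtractf sum.distrib sum_distrib_left sum_distrib_right)
  then show ?thesis using assms(1) unfolding ma_def mb_def by simp
qed

lemma bform_covariance_matrix:
  fixes v :: "'k \<Rightarrow> real" and p :: "'x \<Rightarrow> real"
  shows "bform K (\<lambda>I J. \<Sum>x\<in>C. p x * d I x * d J x) v v = (\<Sum>x\<in>C. p x * (\<Sum>I\<in>K. v I * d I x)^2)"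
proof -
  have "bform K (\<lambda>I J. \<Sum>x\<in>C. p x * d I x * d J x) v v =
      (\<Sum>I\<in>K. \<Sum>J\<in>K. \<Sum>x\<in>C. p x * (v I * d I x) * (v J * d J x))"
    unfolding bform_def by (simp add: sum_distrib_left sum_distrib_right mult_ac)
  also have "\<dots> = (\<Sum>x\<in>C. \<Sum>I\<in>K. \<Sum>J\<in>K. p x * (v I * d I x) * (v J * d J x))"
    by (subst sum.swap) (simp add: sum.swap[of _ K C])
  also have "\<dots> = (\<Sum>x\<in>C. p x * (\<Sum>I\<in>K. v I * d I x)^2)"
    by (simp add: power2_eq_square sum_product sum_distrib_left mult_ac)
  finally show ?thesis .
qed

lemma finite_cube: "finite (cube n)"
  unfolding cube_def by (intro finite_PiE) auto

lemma finite_idx: "finite (idx n)"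
  by (rule finite_subset[of _ "Pow {1..n}"]) (auto simp: idx_def)

lemma idx_memD: "I \<in> idx n \<Longrightarrow> I \<subseteq> {1..n} \<and> I \<noteq> {} \<and> finite I"
  unfolding idx_def using finite_subset by auto

lemma XI_Un:
  assumes "x \<in> cube n" "I \<subseteq> {1..n}" "J \<subseteq> {1..n}"
  shows "XI (I \<union> J) x = XI I x * XI J x"
proof -
  have fin: "finite I" "finite J" using assms(2,3) finite_subset by auto
  have x01: "x i = 0 \<or> x i = 1" if "i \<in> I \<union> J" for i
    using assms that unfolding cube_def by (auto simp: PiE_iff)
  show ?thesis
  proof (cases "\<exists>i\<in>I \<union> J. x i = 0")
    case True
    then obtain i where "i \<in> I \<union> J" "x i = 0" by blast
    then have "prod x (I \<union> J) = 0" "prod x I * prod x J = 0" using fin by (auto intro: prod_zero)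
    then show ?thesis unfolding XI_def by simp
  next
    case False
    then show ?thesis unfolding XI_def using x01 by simp
  qed
qed

lemma G_theta_eq_covariance:
  assumes p1: "(\<Sum>x\<in>cube n. p x) = 1" and I: "I \<in> idx n" and J: "J \<in> idx n"
  shows "G_theta n p I J = (\<Sum>x\<in>cube n. p x * (XI I x - eta n p I) * (XI J x - eta n p J))"
proof -
  have "eta n p (I \<union> J) = (\<Sum>x\<in>cube n. p x * (XI I x * XI J x))"
    unfolding eta_def using XI_Un idx_memD[OF I] idx_memD[OF J] by (intro sum.cong) auto
  then show ?thesis
    unfolding G_theta_def using weighted_covariance_eq[OF p1, of "XI I" "XI J"]
    unfolding eta_def by simp
qed

definition cube_point :: "nat \<Rightarrow> nat set \<Rightarrow> nat \<Rightarrow> real" where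
  "cube_point n T = (\<lambda>i. if i \<in> {1..n} then (if i \<in> T then 1 else 0) else undefined)"

lemma cube_point_in_cube: "cube_point n T \<in> cube n"
  unfolding cube_def cube_point_def by (auto simp: PiE_iff extensional_def)

lemma XI_cube_point:
  assumes "I \<subseteq> {1..n}"
  shows "XI I (cube_point n T) = (if I \<subseteq> T then 1 else 0)"
proof (cases "I \<subseteq> T")
  case True
  then show ?thesis using assms unfolding XI_def cube_point_def by (intro trans[OF prod.neutral]) auto
next
  case False
  then obtain i where "i \<in> I" "i \<notin> T" by blast
  then show ?thesis using assms finite_subset[OF assms] False unfolding XI_def cube_point_def
    by (auto intro!: prod_zero bexI[of _ i])
qed

lemma subset_indicator_sum_const_imp_zero:
  fixes v :: "'a set \<Rightarrow> real"
  assumes K: "finite K" "\<And>I. I \<in> K \<Longrightarrow> finite I \<and> I \<noteq> {}"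
    and const: "\<And>T. (\<Sum>I\<in>K. v I * (if I \<subseteq> T then 1 else 0)) = c"
    and I: "I \<in> K"
  shows "v I = 0"
proof -
  have "c = 0" using const[of "{}"] K(2) by (simp add: sum.neutral)
  with I show ?thesis
  proof (induction "card I" arbitrary: I rule: less_induct)
    case less
    have "(\<Sum>J\<in>K. v J * (if J \<subseteq> I then 1 else 0)) = (\<Sum>J\<in>K. if J = I then v I else 0)"
    proof (rule sum.cong)
      fix J assume J: "J \<in> K"
      have "v J = 0" if "J \<subset> I"
        using that J less K(2)[OF less.prems(1)] by (intro less.hyps) (auto intro: psubset_card_mono)
      then show "v J * (if J \<subseteq> I then 1 else 0) = (if J = I then v I else 0)" by auto
    qed simp
    then show ?case using const[of I] less.prems K(1) by simp
  qed
qed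

lemma pos_def_G_theta:
  assumes pos: "\<forall>x\<in>cube n. p x > 0" and p1: "(\<Sum>x\<in>cube n. p x) = 1"
  shows "pos_def_on (idx n) (G_theta n p)"
  unfolding pos_def_on_def
proof (intro allI impI)
  fix v :: "nat set \<Rightarrow> real" assume v: "\<exists>I\<in>idx n. v I \<noteq> 0"
  define f where "f = (\<lambda>x. \<Sum>I\<in>idx n. v I * (XI I x - eta n p I))"
  have "bform (idx n) (G_theta n p) v v = bform (idx n)
      (\<lambda>I J. \<Sum>x\<in>cube n. p x * (XI I x - eta n p I) * (XI J x - eta n p J)) v v"
    unfolding bform_def using G_theta_eq_covariance[OF p1] by (intro sum.cong refl) auto
  also have "\<dots> = (\<Sum>x\<in>cube n. p x * (f x)^2)"
    unfolding f_def by (rule bform_covariance_matrix)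
  finally have form: "bform (idx n) (G_theta n p) v v = (\<Sum>x\<in>cube n. p x * (f x)^2)" .
  have nonneg: "p x * (f x)^2 \<ge> 0" if "x \<in> cube n" for x using pos that by (simp add: less_imp_le)
  show "bform (idx n) (G_theta n p) v v > 0"
  proof (rule ccontr)
    assume "\<not> ?thesis"
    then have "(\<Sum>x\<in>cube n. p x * (f x)^2) = 0"
      using form nonneg sum_nonneg[of "cube n" "\<lambda>x. p x * (f x)^2"] by simp
    then have "\<forall>x\<in>cube n. p x * (f x)^2 = 0"
      using sum_nonneg_eq_0_iff[OF finite_cube nonneg] by simp
    then have f0: "f x = 0" if "x \<in> cube n" for x
      using that pos by (metis less_irrefl mult_eq_0_iff zero_eq_power2)
    have const: "(\<Sum>I\<in>idx n. v I * (if I \<subseteq> T then 1 else 0)) = (\<Sum>I\<in>idx n. v I * eta n p I)" for T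
    proof -
      have "(\<Sum>I\<in>idx n. v I * (if I \<subseteq> T then 1 else 0)) = (\<Sum>I\<in>idx n. v I * XI I (cube_point n T))"
        by (intro sum.cong refl) (simp add: XI_cube_point[OF idx_memD[THEN conjunct1]])
      also have "\<dots> = f (cube_point n T) + (\<Sum>I\<in>idx n. v I * eta n p I)"
        unfolding f_def by (simp add: right_diff_distrib sum_subtractf)
      finally show ?thesis using f0[OF cube_point_in_cube] by simp
    qed
    have "v I = 0" if "I \<in> idx n" for I
      by (rule subset_indicator_sum_const_imp_zero[OF finite_idx _ const that]) (simp add: idx_memD)
    with v show False by blast
  qed
qed

lemma symmetric_G_theta: "symmetric_on (idx n) (G_theta n p)"
  unfolding symmetric_on_def G_theta_def by (auto simp: Un_commute)

lemma G_theta_diag_le: "G_theta n p I I \<le> 1/4"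
proof -
  have "0 \<le> (eta n p I - 1/2)^2" by simp
  then show ?thesis unfolding G_theta_def by (simp add: power2_eq_square algebra_simps)
qed

theorem lemma1:
  fixes n l :: nat and p :: "(nat \<Rightarrow> real) \<Rightarrow> real"
  assumes "n \<ge> 2" and "1 \<le> l" and "l \<le> n - 1"
    and "\<forall>x\<in>cube n. p x > 0"
    and "(\<Sum>x\<in>cube n. p x) = 1"
  shows "(\<forall>I\<in>I_eta n l. blockA n l p I I \<ge> 1) \<and>
         (\<forall>J\<in>J_theta n l. blockB n l p J J \<le> 1)"
proof -
  \<comment> \<open>The bounds hold for every n and l; only positivity and normalisation of p are used.\<close>
  let ?S = "idx n" and ?G = "G_theta n p"
  have pd: "pos_def_on ?S ?G" using assms(4,5) by (rule pos_def_G_theta)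
  have I_sub: "I_eta n l \<subseteq> ?S" and J_sub: "J_theta n l \<subseteq> ?S"
    unfolding I_eta_def J_theta_def by auto
  have "blockA n l p = mat_inv_on (I_eta n l) ?G"
    unfolding blockA_def G_eta_def using I_sub pos_def_on_mat_inv_on[OF finite_idx pd]
    by (intro mat_inv_on_cong mat_inv_on_mat_inv_on[OF finite_idx]) auto
  then have A: "blockA n l p I I \<ge> 2 - ?G I I" if "I \<in> I_eta n l" for I
    using diag_inverse_principal_submatrix_ge[OF finite_idx pd symmetric_G_theta I_sub that] by simp
  have B: "blockB n l p J J \<le> ?G J J" if "J \<in> J_theta n l" for J
    unfolding blockB_def
    by (rule diag_inverse_principal_submatrix_of_inverse_le[OF finite_idx pd symmetric_G_theta J_sub that])
  show ?thesis
  proof (intro conjI ballI)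
    fix I assume "I \<in> I_eta n l"
    then show "blockA n l p I I \<ge> 1" using A G_theta_diag_le[of n p I] by fastforce
  next
    fix J assume "J \<in> J_theta n l"
    then show "blockB n l p J J \<le> 1" using B G_theta_diag_le[of n p J] by fastforce
  qed
qed

end
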